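(* Let $G$ be a simple graph and let $K_{s_1},K_{s_2},\ldots,K_{s_k}$ be pairwise edge-disjoint cliques (complete subgraphs) of $G$ with $s_i\ge 3$ for all $i$. Then the independence number of the triangular signed graph $G_{\vartriangle}$ satisfies $$\alpha(G_{\vartriangle})\ge\sum_{i=1}^{k}\frac{\binom{s_i}{3}}{1+3(s_i-3)}.$$
   Context: Edges of $G$ are oriented and each triangle $\vartriangle$ of $G$ is given a cyclic orientation. The triangular signed graph $G_{\vartriangle}$ has the triangles of $G$ as vertices; two distinct triangles are adjacent if and only if they share an edge $e$ (the edge being positive if $e$ agrees with the orientations of both triangles or disagrees with both, and negative otherwise). The independence number $\alpha(G_{\vartriangle})$ is that of the underlying unsigned graph. *)

theory Defs
  imports Complex_Main
begin

definition simple_graph :: "'a set \<Rightarrow> ('a \<Rightarrow> 'a \<Rightarrow> bool) \<Rightarrow> bool" where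
  "simple_graph V E \<longleftrightarrow> finite V \<and> (\<forall>x y. E x y \<longrightarrow> x \<in> V \<and> y \<in> V)
     \<and> (\<forall>x y. E x y \<longrightarrow> E y x) \<and> (\<forall>x. \<not> E x x)"

definition is_clique :: "'a set \<Rightarrow> ('a \<Rightarrow> 'a \<Rightarrow> bool) \<Rightarrow> 'a set \<Rightarrow> bool" where
  "is_clique V E K \<longleftrightarrow> K \<subseteq> V \<and> (\<forall>x\<in>K. \<forall>y\<in>K. x \<noteq> y \<longrightarrow> E x y)"

definition clique_edges :: "'a set \<Rightarrow> 'a set set" where
  "clique_edges K = {e. e \<subseteq> K \<and> card e = 2}"

definition triangles :: "'a set \<Rightarrow> ('a \<Rightarrow> 'a \<Rightarrow> bool) \<Rightarrow> 'a set set" where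
  "triangles V E = {T. T \<subseteq> V \<and> card T = 3 \<and> (\<forall>x\<in>T. \<forall>y\<in>T. x \<noteq> y \<longrightarrow> E x y)}"

text \<open>Adjacency in the underlying unsigned graph of the triangular signed graph:
  two distinct triangles sharing an edge.\<close>
definition tri_adj :: "'a set \<Rightarrow> ('a \<Rightarrow> 'a \<Rightarrow> bool) \<Rightarrow> 'a set \<Rightarrow> 'a set \<Rightarrow> bool" where
  "tri_adj V E T1 T2 \<longleftrightarrow> T1 \<in> triangles V E \<and> T2 \<in> triangles V E \<and> T1 \<noteq> T2
     \<and> (\<exists>e. e \<subseteq> T1 \<inter> T2 \<and> card e = 2 \<and> (\<forall>x\<in>e. \<forall>y\<in>e. x \<noteq> y \<longrightarrow> E x y))"

definition tri_independent :: "'a set \<Rightarrow> ('a \<Rightarrow> 'a \<Rightarrow> bool) \<Rightarrow> 'a set set \<Rightarrow> bool" where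
  "tri_independent V E S \<longleftrightarrow> S \<subseteq> triangles V E \<and> (\<forall>T1\<in>S. \<forall>T2\<in>S. \<not> tri_adj V E T1 T2)"

definition tri_alpha :: "'a set \<Rightarrow> ('a \<Rightarrow> 'a \<Rightarrow> bool) \<Rightarrow> nat" where
  "tri_alpha V E = Max {card S | S. tri_independent V E S}"

end

theory Submission
  imports Defs
begin

text \<open>Inside a single clique \<open>K\<close> with \<open>s\<close> vertices, every triangle shares an edge with exactly
  \<open>3(s - 3)\<close> others, so the greedy algorithm finds an independent set of at least
  \<open>binom(s,3) / (1 + 3(s - 3))\<close> triangles of \<open>K\<close>. Two triangles from different cliques cannot share
  an edge, because the cliques are edge-disjoint; hence the independent sets obtained from the
  individual cliques are disjoint and their union is still independent.\<close>

definition clique_triangles :: "'a set \<Rightarrow> 'a set set" where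
  "clique_triangles K = {T. T \<subseteq> K \<and> card T = 3}"

lemma finite_clique_triangles: "finite K \<Longrightarrow> finite (clique_triangles K)"
  by (simp add: clique_triangles_def)

lemma card_clique_triangles: "finite K \<Longrightarrow> card (clique_triangles K) = card K choose 3"
  using n_subsets by (simp add: clique_triangles_def)

lemma clique_triangles_subset_triangles:
  "is_clique V E K \<Longrightarrow> clique_triangles K \<subseteq> triangles V E"
  by (auto simp: clique_triangles_def triangles_def is_clique_def)

lemma finite_triangles: "simple_graph V E \<Longrightarrow> finite (triangles V E)"
  by (rule finite_subset[of _ "Pow V"]) (auto simp: simple_graph_def triangles_def)

lemma tri_adj_sym: "tri_adj V E T T' \<Longrightarrow> tri_adj V E T' T"
  unfolding tri_adj_def by (auto simp: Int_commute)

lemma tri_adj_irrefl: "\<not> tri_adj V E T T"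
  by (simp add: tri_adj_def)

lemma tri_adj_common_clique_edge:
  assumes "tri_adj V E T T'" and "T \<subseteq> A" and "T' \<subseteq> B"
  shows "clique_edges A \<inter> clique_edges B \<noteq> {}"
proof -
  obtain e where "e \<subseteq> T \<inter> T'" "card e = 2"
    using assms(1) by (auto simp: tri_adj_def)
  then have "e \<in> clique_edges A \<inter> clique_edges B"
    using assms(2,3) by (auto simp: clique_edges_def)
  then show ?thesis by blast
qed

lemma clique_triangles_common_clique_edge:
  assumes "T \<in> clique_triangles A" and "T \<in> clique_triangles B"
  shows "clique_edges A \<inter> clique_edges B \<noteq> {}"
proof -
  obtain a b c where "T = {a, b, c}" "a \<noteq> b"
    using assms(1) by (auto simp: clique_triangles_def card_3_iff)
  then have "{a, b} \<in> clique_edges A \<inter> clique_edges B"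
    using assms by (auto simp: clique_triangles_def clique_edges_def)
  then show ?thesis by blast
qed

lemma card_le_tri_alpha:
  assumes "simple_graph V E" and "tri_independent V E S"
  shows "card S \<le> tri_alpha V E"
proof -
  have "{card S | S. tri_independent V E S} \<subseteq> card ` Pow (triangles V E)"
    by (auto simp: tri_independent_def)
  then have "finite {card S | S. tri_independent V E S}"
    using finite_triangles[OF assms(1)] finite_subset by blast
  then show ?thesis
    unfolding tri_alpha_def by (rule Max_ge) (use assms(2) in auto)
qed

lemma independent_subset_greedy:
  fixes R :: "'b \<Rightarrow> 'b \<Rightarrow> bool"
  assumes "finite X" and sym: "\<And>x y. R x y \<Longrightarrow> R y x" and irrefl: "\<And>x. \<not> R x x"
    and "\<And>x. x \<in> X \<Longrightarrow> card {y\<in>X. R x y} \<le> d"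
  shows "\<exists>S\<subseteq>X. (\<forall>a\<in>S. \<forall>b\<in>S. \<not> R a b) \<and> card X \<le> (d + 1) * card S"
  using assms(1,4)
proof (induction X rule: finite_psubset_induct)
  case (psubset X)
  show ?case
  proof (cases "X = {}")
    case False
    then obtain x where x: "x \<in> X" by auto
    define N where "N = insert x {y\<in>X. R x y}"
    have "N \<subseteq> X" using x by (auto simp: N_def)
    have card_N: "card N \<le> d + 1"
      using card_insert_le_m1[of "d + 1" "{y\<in>X. R x y}" x] psubset.prems[OF x] psubset.hyps(1)
      by (simp add: N_def)
    have degree: "card {y\<in>X - N. R z y} \<le> d" if "z \<in> X - N" for z
    proof -
      have "card {y\<in>X - N. R z y} \<le> card {y\<in>X. R z y}"
        by (rule card_mono) (use psubset.hyps(1) in auto)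
      then show ?thesis using psubset.prems[of z] that by simp
    qed
    have "X - N \<subset> X" using x by (auto simp: N_def)
    then obtain S where S: "S \<subseteq> X - N" "\<forall>a\<in>S. \<forall>b\<in>S. \<not> R a b"
      "card (X - N) \<le> (d + 1) * card S"
      using psubset.IH[OF _ degree] by blast
    have "x \<notin> S" using S(1) by (auto simp: N_def)
    have "finite S" using finite_subset[OF S(1)] psubset.hyps(1) by simp
    have "\<forall>a\<in>insert x S. \<forall>b\<in>insert x S. \<not> R a b"
      using S(1,2) sym irrefl by (auto simp: N_def)
    moreover have "finite N" using finite_subset[OF \<open>N \<subseteq> X\<close> psubset.hyps(1)] .
    then have "card X = card (X - N) + card N"
      using card_Diff_subset[OF _ \<open>N \<subseteq> X\<close>] card_mono[OF psubset.hyps(1) \<open>N \<subseteq> X\<close>] by simp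
    then have "card X \<le> (d + 1) * card (insert x S)"
      using S(3) card_N \<open>x \<notin> S\<close> \<open>finite S\<close> by simp
    ultimately show ?thesis using S(1) x by (intro exI[of _ "insert x S"]) auto
  qed auto
qed

text \<open>A triangle \<open>T'\<close> sharing an edge with \<open>T\<close> is that edge plus a vertex of \<open>K - T\<close>.\<close>

lemma card_clique_triangles_sharing_edge:
  assumes "finite K" and "T \<in> clique_triangles K"
  shows "card {T'\<in>clique_triangles K. T' \<noteq> T \<and> (\<exists>e. e \<subseteq> T \<inter> T' \<and> card e = 2)}
           \<le> 3 * (card K - 3)"
proof -
  let ?pairs = "{e. e \<subseteq> T \<and> card e = 2} \<times> (K - T)"
  have T: "T \<subseteq> K" "card T = 3" "finite T"
    using assms finite_subset by (auto simp: clique_triangles_def)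
  have "{T'\<in>clique_triangles K. T' \<noteq> T \<and> (\<exists>e. e \<subseteq> T \<inter> T' \<and> card e = 2)}
        \<subseteq> (\<lambda>(e, v). insert v e) ` ?pairs"
  proof
    fix T' assume "T' \<in> {T'\<in>clique_triangles K. T' \<noteq> T \<and> (\<exists>e. e \<subseteq> T \<inter> T' \<and> card e = 2)}"
    then obtain e where T': "T' \<subseteq> K" "card T' = 3" "T' \<noteq> T" and e: "e \<subseteq> T \<inter> T'" "card e = 2"
      by (auto simp: clique_triangles_def)
    have "finite T'" using T'(2) by (metis card.infinite zero_neq_numeral)
    then have "card (T' - e) = 1"
      using e T'(2) card_Diff_subset[of e T'] finite_subset[of e T'] by simp
    then obtain v where v: "T' - e = {v}" using card_1_singletonE by blast
    then have T'_eq: "T' = insert v e" using e by blast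
    have "v \<notin> T"
    proof
      assume "v \<in> T"
      then have "T' \<subseteq> T" using T'_eq e by auto
      then show False using T'(2,3) T(2,3) card_subset_eq by metis
    qed
    then have "(e, v) \<in> ?pairs" using T' v e by auto
    then show "T' \<in> (\<lambda>(e, v). insert v e) ` ?pairs" using T'_eq by force
  qed
  then have "card {T'\<in>clique_triangles K. T' \<noteq> T \<and> (\<exists>e. e \<subseteq> T \<inter> T' \<and> card e = 2)}
      \<le> card ((\<lambda>(e, v). insert v e) ` ?pairs)"
    by (rule card_mono[rotated]) (use assms T in auto)
  also have "\<dots> \<le> card ?pairs" by (rule card_image_le) (use assms T in auto)
  also have "\<dots> = (card T choose 2) * (card K - card T)"
    using n_subsets[OF T(3), of 2] T assms(1) by (simp add: card_cartesian_product card_Diff_subset)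
  also have "\<dots> = 3 * (card K - 3)"
    using T(2) by (simp add: choose_two)
  finally show ?thesis .
qed

lemma tri_independent_subset_clique_triangles:
  assumes "simple_graph V E" and "is_clique V E K" and "card K \<ge> 3"
  shows "\<exists>S\<subseteq>clique_triangles K. tri_independent V E S \<and>
           real (card K choose 3) / (1 + 3 * (real (card K) - 3)) \<le> real (card S)"
proof -
  have "finite K"
    using assms(1,2) finite_subset by (auto simp: simple_graph_def is_clique_def)
  have degree: "card {T'\<in>clique_triangles K. tri_adj V E T T'} \<le> 3 * (card K - 3)"
    if "T \<in> clique_triangles K" for T
  proof -
    have "card {T'\<in>clique_triangles K. tri_adj V E T T'}
        \<le> card {T'\<in>clique_triangles K. T' \<noteq> T \<and> (\<exists>e. e \<subseteq> T \<inter> T' \<and> card e = 2)}"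
      by (rule card_mono) (auto simp: tri_adj_def finite_clique_triangles[OF \<open>finite K\<close>])
    then show ?thesis
      using card_clique_triangles_sharing_edge[OF \<open>finite K\<close> that] by linarith
  qed
  obtain S where S: "S \<subseteq> clique_triangles K" "\<forall>a\<in>S. \<forall>b\<in>S. \<not> tri_adj V E a b"
    and "card (clique_triangles K) \<le> (3 * (card K - 3) + 1) * card S"
    using independent_subset_greedy[OF finite_clique_triangles[OF \<open>finite K\<close>]
        tri_adj_sym tri_adj_irrefl degree] by blast
  then have card_S: "card K choose 3 \<le> (3 * (card K - 3) + 1) * card S"
    by (simp add: card_clique_triangles[OF \<open>finite K\<close>])
  have "real (card K choose 3) \<le> real ((3 * (card K - 3) + 1) * card S)"
    using card_S by (simp only: of_nat_le_iff)
  also have "\<dots> = (1 + 3 * (real (card K) - 3)) * real (card S)"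
    using assms(3) by (simp add: algebra_simps)
  finally have "real (card K choose 3) / (1 + 3 * (real (card K) - 3)) \<le> real (card S)"
    using assms(3) by (simp add: divide_le_eq mult.commute)
  moreover have "tri_independent V E S"
    using S clique_triangles_subset_triangles[OF assms(2)] by (auto simp: tri_independent_def)
  ultimately show ?thesis using S(1) by blast
qed

lemma tri_independent_UN_edge_disjoint_cliques:
  assumes "\<And>i. i \<in> I \<Longrightarrow> S i \<subseteq> clique_triangles (K i)"
    and "\<And>i. i \<in> I \<Longrightarrow> tri_independent V E (S i)"
    and "\<And>i j. i \<in> I \<Longrightarrow> j \<in> I \<Longrightarrow> i \<noteq> j \<Longrightarrow> clique_edges (K i) \<inter> clique_edges (K j) = {}"
  shows "tri_independent V E (\<Union>i\<in>I. S i)"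
  unfolding tri_independent_def
proof (intro conjI ballI)
  show "(\<Union>i\<in>I. S i) \<subseteq> triangles V E"
    using assms(2) by (auto simp: tri_independent_def)
next
  fix T T' assume "T \<in> (\<Union>i\<in>I. S i)" "T' \<in> (\<Union>i\<in>I. S i)"
  then obtain i j where ij: "i \<in> I" "j \<in> I" "T \<in> S i" "T' \<in> S j" by blast
  show "\<not> tri_adj V E T T'"
  proof (cases "i = j")
    case True
    then show ?thesis using assms(2) ij by (auto simp: tri_independent_def)
  next
    case False
    have "T \<subseteq> K i" "T' \<subseteq> K j"
      using assms(1) ij by (auto simp: clique_triangles_def)
    then show ?thesis
      using tri_adj_common_clique_edge assms(3)[OF ij(1,2) False] by blast
  qed
qed

lemma card_UN_edge_disjoint_cliques:
  assumes "finite I" and "\<And>i. i \<in> I \<Longrightarrow> finite (S i)"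
    and "\<And>i. i \<in> I \<Longrightarrow> S i \<subseteq> clique_triangles (K i)"
    and "\<And>i j. i \<in> I \<Longrightarrow> j \<in> I \<Longrightarrow> i \<noteq> j \<Longrightarrow> clique_edges (K i) \<inter> clique_edges (K j) = {}"
  shows "card (\<Union>i\<in>I. S i) = (\<Sum>i\<in>I. card (S i))"
proof -
  have "S i \<inter> S j = {}" if "i \<in> I" "j \<in> I" "i \<noteq> j" for i j
    using clique_triangles_common_clique_edge[of _ "K i" "K j"] assms(3)[OF that(1)]
      assms(3)[OF that(2)] assms(4)[OF that] by blast
  then show ?thesis
    using assms(1,2) by (simp add: card_UN_disjoint)
qed

theorem lemma5p7:
  fixes V :: "'a set" and E :: "'a \<Rightarrow> 'a \<Rightarrow> bool"
    and k :: nat and K :: "nat \<Rightarrow> 'a set"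
  assumes "simple_graph V E"
    and "\<And>i. i < k \<Longrightarrow> is_clique V E (K i)"
    and "\<And>i. i < k \<Longrightarrow> card (K i) \<ge> 3"
    and "\<And>i j. i < k \<Longrightarrow> j < k \<Longrightarrow> i \<noteq> j \<Longrightarrow> clique_edges (K i) \<inter> clique_edges (K j) = {}"
  shows "real (tri_alpha V E) \<ge>
           (\<Sum>i<k. real (card (K i) choose 3) / (1 + 3 * (real (card (K i)) - 3)))"
proof -
  have "\<forall>i\<in>{..<k}. \<exists>S. S \<subseteq> clique_triangles (K i) \<and> tri_independent V E S \<and>
      real (card (K i) choose 3) / (1 + 3 * (real (card (K i)) - 3)) \<le> real (card S)"
    using tri_independent_subset_clique_triangles[OF assms(1-3)] by blast
  then obtain S where S: "\<And>i. i < k \<Longrightarrow> S i \<subseteq> clique_triangles (K i)"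
      "\<And>i. i < k \<Longrightarrow> tri_independent V E (S i)"
    and card_S: "\<And>i. i < k \<Longrightarrow>
      real (card (K i) choose 3) / (1 + 3 * (real (card (K i)) - 3)) \<le> real (card (S i))"
    by (metis lessThan_iff)
  have finite_S: "finite (S i)" if "i < k" for i
    using S(2)[OF that] finite_triangles[OF assms(1)] finite_subset
    by (auto simp: tri_independent_def)
  have "(\<Sum>i<k. real (card (K i) choose 3) / (1 + 3 * (real (card (K i)) - 3)))
      \<le> (\<Sum>i<k. real (card (S i)))"
    by (rule sum_mono) (use card_S in simp)
  also have "\<dots> = real (card (\<Union>i<k. S i))"
    using card_UN_edge_disjoint_cliques[of "{..<k}" S K] finite_S S(1) assms(4) by simp
  also have "\<dots> \<le> real (tri_alpha V E)"
    using card_le_tri_alpha[OF assms(1) tri_independent_UN_edge_disjoint_cliques[of "{..<k}" S K]]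
      S assms(4) by simp
  finally show ?thesis .
qed

end
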